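(* Let $n\ge 3$, let $a_0,\ldots,a_{n-1}$ be indeterminates over $\mathbb{Q}$, $f=x^n+a_{n-1}x^{n-1}+\cdots+a_0$, \[f_1(x,y)=\frac{f(y)-f(x)}{y-x},\qquad f_3(x,y)=\frac{f(y)-2f\left(\frac{x+y}{2}\right)+f(x)}{\frac{(y-x)^2}{2}},\] and $F=\operatorname{res}(f_1,f_3,y)$. Then $\deg(F,x)=(n-1)(n-2)$.
   Context: The quotients are polynomials in $x,y$; $\operatorname{res}(\cdot,\cdot,y)$ is the Sylvester resultant with respect to $y$. *)

theory Defs
  imports "HOL-Library.Poly_Mapping" "HOL-Computational_Algebra.Polynomial"
    "Subresultants.Resultant_Prelim"
begin

text \<open>Multivariate polynomials over the rationals in indeterminates a_0, a_1, ...: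
  monomials are finitely supported exponent vectors nat \<Rightarrow>0 nat.\<close>
type_synonym mpoly = "(nat \<Rightarrow>\<^sub>0 nat) \<Rightarrow>\<^sub>0 rat"

definition mconst :: "rat \<Rightarrow> mpoly" where
  "mconst c = Poly_Mapping.single 0 c"

definition avar :: "nat \<Rightarrow> mpoly" where
  "avar i = Poly_Mapping.single (Poly_Mapping.single i 1) 1"

definition fpoly :: "nat \<Rightarrow> mpoly poly" where
  "fpoly n = monom 1 n + (\<Sum>i<n. monom (avar i) i)"

text \<open>Bivariate polynomials in x, y over Q[a] are represented as mpoly poly poly:
  the outer variable is y, the coefficients are polynomials in x.\<close>
definition Xv :: "mpoly poly poly" where "Xv = [:[:0, 1:]:]"
definition Yv :: "mpoly poly poly" where "Yv = [:0, 1:]"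

definition eval2 :: "mpoly poly \<Rightarrow> mpoly poly poly \<Rightarrow> mpoly poly poly" where
  "eval2 p z = poly (map_poly (\<lambda>c. [:[:c:]:]) p) z"

definition f1 :: "nat \<Rightarrow> mpoly poly poly" where
  "f1 n = (THE q. (Yv - Xv) * q = eval2 (fpoly n) Yv - eval2 (fpoly n) Xv)"

definition f3 :: "nat \<Rightarrow> mpoly poly poly" where
  "f3 n = (THE q. (smult [:mconst (1/2):] ((Yv - Xv)^2)) * q =
      eval2 (fpoly n) Yv
      - 2 * eval2 (fpoly n) (smult [:mconst (1/2):] (Xv + Yv))
      + eval2 (fpoly n) Xv)"

definition Fres :: "nat \<Rightarrow> mpoly poly" where
  "Fres n = resultant (f1 n) (f3 n)"

end

theory Submission
  imports Defs "Subresultants.Subresultant_Gcd" "HOL-Computational_Algebra.Fundamental_Theorem_Algebra"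
    "HOL-Computational_Algebra.Field_as_Ring"
begin

text \<open>Weighting row i of the Sylvester matrix of two bivariate polynomials of total degrees p and q
  by -i (or q - i) and column j by j bounds the x-degree of each entry, so the resultant in y has
  x-degree at most pq, and its coefficient of x^(pq) is the resultant of the leading forms.
  For f1 and f3 these leading forms are (y^n - 1)/(y - 1) and 2 (y^n - 2 ((1 + y)/2)^n + 1)/(y - 1)^2,
  of exact degrees n - 1 and n - 2. A common complex root z would satisfy z^n = ((1 + z)/2)^n = 1, so z and (1 + z)/2 both lie on the
  unit circle, forcing z = 1, which is not a root of the first form. Hence the top coefficient is
  nonzero and the degree is exactly (n - 1)(n - 2).\<close>

section \<open>Total degree and leading form of bivariate polynomials\<close>

text \<open>A bivariate polynomial is a polynomial in y whose coefficients are polynomials in x.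
  Its leading form of degree d is the homogeneous part of total degree d, dehomogenised at x = 1.\<close>

definition total_degree_le :: "nat \<Rightarrow> 'a::comm_ring_1 poly poly \<Rightarrow> bool" where
  "total_degree_le d P \<longleftrightarrow> (\<forall>j. coeff P j \<noteq> 0 \<longrightarrow> j + degree (coeff P j) \<le> d)"

definition leading_form :: "nat \<Rightarrow> 'a::comm_ring_1 poly poly \<Rightarrow> 'a poly" where
  "leading_form d P = (\<Sum>j\<le>d. monom (coeff (coeff P j) (d - j)) j)"

lemma coeff_leading_form:
  "coeff (leading_form d P) k = (if k \<le> d then coeff (coeff P k) (d - k) else 0)"
  unfolding leading_form_def coeff_sum coeff_monom by (auto simp: sum.delta)

lemma degree_leading_form_le: "degree (leading_form d P) \<le> d"
  by (rule degree_le) (auto simp: coeff_leading_form)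

lemma total_degree_le_coeff_eq_0: "total_degree_le d P \<Longrightarrow> d < j \<Longrightarrow> coeff P j = 0"
  unfolding total_degree_le_def by force

lemma total_degree_le_degree_coeff: "total_degree_le d P \<Longrightarrow> degree (coeff P j) \<le> d - j"
  unfolding total_degree_le_def by (cases "coeff P j = 0") force+

lemma total_degree_leI:
  assumes "\<And>j. d < j \<Longrightarrow> coeff P j = 0" "\<And>j. j \<le> d \<Longrightarrow> degree (coeff P j) \<le> d - j"
  shows "total_degree_le d P"
  unfolding total_degree_le_def using assms by (metis le_diff_conv2 add.commute linorder_not_le)

lemma total_degree_le_mono: "total_degree_le d P \<Longrightarrow> d \<le> e \<Longrightarrow> total_degree_le e P"
  unfolding total_degree_le_def by force

lemma total_degree_le_ex: "\<exists>d. total_degree_le d P"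
proof
  show "total_degree_le (degree P + (\<Sum>j\<le>degree P. degree (coeff P j))) P"
  proof (rule total_degree_leI)
    fix j
    show "degree (coeff P j) \<le> degree P + (\<Sum>j\<le>degree P. degree (coeff P j)) - j"
    proof (cases "j \<le> degree P")
      case True
      then have "degree (coeff P j) \<le> (\<Sum>j\<le>degree P. degree (coeff P j))"
        by (intro member_le_sum) auto
      then show ?thesis using True by linarith
    qed (simp add: coeff_eq_0)
  qed (simp add: coeff_eq_0)
qed

lemma total_degree_le_0 [simp]: "total_degree_le d 0"
  by (simp add: total_degree_le_def)

lemma leading_form_0 [simp]: "leading_form d 0 = 0"
  by (rule poly_eqI) (simp add: coeff_leading_form)

lemma total_degree_le_const: "total_degree_le 0 [:[:c:]:]"
  by (rule total_degree_leI) (auto simp: coeff_pCons split: nat.splits)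

lemma leading_form_const: "leading_form 0 [:[:c:]:] = [:c:]"
  by (rule poly_eqI) (auto simp: coeff_leading_form coeff_pCons split: nat.splits)

lemma total_degree_le_add:
  "total_degree_le d P \<Longrightarrow> total_degree_le d Q \<Longrightarrow> total_degree_le d (P + Q)"
  by (rule total_degree_leI)
    (auto simp: total_degree_le_coeff_eq_0 intro: order.trans[OF degree_add_le] total_degree_le_degree_coeff)

lemma total_degree_le_diff:
  "total_degree_le d P \<Longrightarrow> total_degree_le d Q \<Longrightarrow> total_degree_le d (P - Q)"
  by (rule total_degree_leI)
    (auto simp: total_degree_le_coeff_eq_0 intro: order.trans[OF degree_diff_le] total_degree_le_degree_coeff)

lemma leading_form_add: "leading_form d (P + Q) = leading_form d P + leading_form d Q"
  by (rule poly_eqI) (simp add: coeff_leading_form)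

lemma leading_form_diff: "leading_form d (P - Q) = leading_form d P - leading_form d Q"
  by (rule poly_eqI) (simp add: coeff_leading_form)

lemma total_degree_le_sum:
  "(\<And>x. x \<in> A \<Longrightarrow> total_degree_le d (f x)) \<Longrightarrow> total_degree_le d (\<Sum>x\<in>A. f x)"
  by (induction A rule: infinite_finite_induct) (auto intro: total_degree_le_add)

lemma leading_form_sum: "leading_form d (\<Sum>x\<in>A. f x) = (\<Sum>x\<in>A. leading_form d (f x))"
  by (induction A rule: infinite_finite_induct) (auto simp: leading_form_add)

lemma leading_form_eq_0_above:
  assumes "total_degree_le d P" "d < e"
  shows "leading_form e P = 0"
proof (rule poly_eqI)
  fix k
  have "coeff (coeff P k) (e - k) = 0" if "k \<le> e"
  proof (cases "coeff P k = 0")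
    case False
    then have "k \<le> d" using total_degree_le_coeff_eq_0[OF assms(1), of k] by force
    then have "degree (coeff P k) < e - k"
      using total_degree_le_degree_coeff[OF assms(1), of k] assms(2) by linarith
    then show ?thesis by (simp add: coeff_eq_0)
  qed simp
  then show "coeff (leading_form e P) k = coeff 0 k" by (simp add: coeff_leading_form)
qed

lemma coeff_mult_degree_sum:
  fixes p q :: "'a::comm_semiring_1 poly"
  assumes "degree p \<le> a" "degree q \<le> b"
  shows "coeff (p * q) (a + b) = coeff p a * coeff q b"
proof -
  have "coeff (p * q) (a + b) = (\<Sum>i\<in>{a}. coeff p i * coeff q (a + b - i))"
    unfolding coeff_mult
  proof (rule sum.mono_neutral_right)
    show "\<forall>i\<in>{..a + b} - {a}. coeff p i * coeff q (a + b - i) = 0"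
    proof
      fix i assume "i \<in> {..a + b} - {a}"
      then have "i < a \<or> i > a" by auto
      then show "coeff p i * coeff q (a + b - i) = 0" using assms by (auto simp: coeff_eq_0)
    qed
  qed auto
  then show ?thesis by simp
qed

lemma total_degree_le_mult:
  assumes P: "total_degree_le a P" and Q: "total_degree_le b Q"
  shows "total_degree_le (a + b) (P * Q)"
proof (rule total_degree_leI)
  fix j assume "a + b < j"
  show "coeff (P * Q) j = 0"
    unfolding coeff_mult
  proof (rule sum.neutral, rule ballI)
    fix i assume "i \<in> {..j}"
    then have "a < i \<or> b < j - i" using \<open>a + b < j\<close> by auto
    then show "coeff P i * coeff Q (j - i) = 0"
      using total_degree_le_coeff_eq_0[OF P, of i] total_degree_le_coeff_eq_0[OF Q, of "j - i"] by auto
  qed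
next
  fix j assume j: "j \<le> a + b"
  show "degree (coeff (P * Q) j) \<le> a + b - j"
    unfolding coeff_mult
  proof (rule degree_sum_le)
    fix i assume i: "i \<in> {..j}"
    show "degree (coeff P i * coeff Q (j - i)) \<le> a + b - j"
    proof (cases "a < i \<or> b < j - i")
      case False
      have "degree (coeff P i * coeff Q (j - i)) \<le> (a - i) + (b - (j - i))"
        by (rule order.trans[OF degree_mult_le add_mono[OF total_degree_le_degree_coeff[OF P]
              total_degree_le_degree_coeff[OF Q]]])
      also have "\<dots> = a + b - j" using False i by auto
      finally show ?thesis .
    qed (auto simp: total_degree_le_coeff_eq_0[OF P] total_degree_le_coeff_eq_0[OF Q])
  qed simp
qed

lemma leading_form_mult:
  assumes P: "total_degree_le a P" and Q: "total_degree_le b Q"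
  shows "leading_form (a + b) (P * Q) = leading_form a P * leading_form b Q"
proof (rule poly_eqI)
  fix k
  show "coeff (leading_form (a + b) (P * Q)) k = coeff (leading_form a P * leading_form b Q) k"
  proof (cases "k \<le> a + b")
    case False
    have "degree (leading_form a P * leading_form b Q) \<le> a + b"
      by (rule order.trans[OF degree_mult_le add_mono[OF degree_leading_form_le degree_leading_form_le]])
    then show ?thesis using False by (auto simp: coeff_leading_form coeff_eq_0)
  next
    case True
    have "coeff (coeff P i * coeff Q (k - i)) (a + b - k)
        = coeff (leading_form a P) i * coeff (leading_form b Q) (k - i)" if "i \<le> k" for i
    proof (cases "a < i \<or> b < k - i")
      case False
      then have "a + b - k = (a - i) + (b - (k - i))" using that by auto
      then have "coeff (coeff P i * coeff Q (k - i)) (a + b - k)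
          = coeff (coeff P i) (a - i) * coeff (coeff Q (k - i)) (b - (k - i))"
        using coeff_mult_degree_sum[OF total_degree_le_degree_coeff[OF P] total_degree_le_degree_coeff[OF Q]]
        by (simp only:)
      moreover have "i \<le> a" "k - i \<le> b" using False by auto
      ultimately show ?thesis unfolding coeff_leading_form by simp
    next
      case True
      then have "coeff P i = 0 \<or> coeff Q (k - i) = 0"
        using total_degree_le_coeff_eq_0[OF P, of i] total_degree_le_coeff_eq_0[OF Q, of "k - i"] by blast
      then show ?thesis using True by (auto simp: coeff_leading_form)
    qed
    then have "(\<Sum>i\<le>k. coeff (coeff P i * coeff Q (k - i)) (a + b - k))
        = (\<Sum>i\<le>k. coeff (leading_form a P) i * coeff (leading_form b Q) (k - i))"
      by (intro sum.cong) auto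
    then show ?thesis using True by (simp only: coeff_leading_form coeff_mult coeff_sum if_True)
  qed
qed

lemma total_degree_le_1: "total_degree_le 0 1"
  using total_degree_le_const[of 1] by (simp del: pCons_one add: one_pCons)

lemma leading_form_1: "leading_form 0 1 = 1"
  using leading_form_const[of 1] by (simp del: pCons_one add: one_pCons)

lemma total_degree_le_power: "total_degree_le a P \<Longrightarrow> total_degree_le (k * a) (P ^ k)"
  by (induction k) (auto simp: total_degree_le_1 total_degree_le_mult)

lemma leading_form_power: "total_degree_le a P \<Longrightarrow> leading_form (k * a) (P ^ k) = leading_form a P ^ k"
proof (induction k)
  case 0
  show ?case by (simp add: leading_form_1)
next
  case (Suc k)
  then show ?case
    using leading_form_mult[OF Suc.prems total_degree_le_power[OF Suc.prems]] by (simp add: add.commute)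
qed

lemma total_degree_lt_if_leading_form_eq_0:
  assumes "total_degree_le d P" "leading_form d P = 0" "coeff P j \<noteq> 0"
  shows "j + degree (coeff P j) < d"
proof (rule ccontr)
  assume "\<not> ?thesis"
  then have "j \<le> d" "d - j = degree (coeff P j)"
    using assms(1,3) unfolding total_degree_le_def by auto
  then have "coeff (leading_form d P) j = lead_coeff (coeff P j)" by (simp add: coeff_leading_form)
  then show False using assms(2,3) by simp
qed

lemma leading_form_ne_0_ex:
  assumes "total_degree_le d P" "P \<noteq> 0"
  shows "\<exists>t. total_degree_le t P \<and> leading_form t P \<noteq> 0"
  using assms(1)
proof (induction d)
  case 0
  obtain j where "coeff P j \<noteq> 0" using assms(2) by (metis leading_coeff_0_iff)
  then show ?case using 0 total_degree_lt_if_leading_form_eq_0[of 0 P j] by auto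
next
  case (Suc d)
  have "total_degree_le d P" if "leading_form (Suc d) P = 0"
    using total_degree_lt_if_leading_form_eq_0[OF Suc.prems that]
    unfolding total_degree_le_def by fastforce
  then show ?case using Suc by blast
qed

lemma total_degree_le_quotient:
  fixes D q :: "'a::idom poly poly"
  assumes D: "total_degree_le e D" "leading_form e D \<noteq> 0"
    and Dq: "total_degree_le d (D * q)" and "e \<le> d"
  shows "total_degree_le (d - e) q"
proof (cases "q = 0")
  case False
  obtain d0 where "total_degree_le d0 q" using total_degree_le_ex by blast
  then obtain t where t: "total_degree_le t q" "leading_form t q \<noteq> 0"
    using leading_form_ne_0_ex False by blast
  have "leading_form (e + t) (D * q) = leading_form e D * leading_form t q"
    by (rule leading_form_mult[OF D(1) t(1)])
  also have "\<dots> \<noteq> 0" using D(2) t(2) by simp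
  finally have "\<not> d < e + t" using leading_form_eq_0_above[OF Dq, of "e + t"] by blast
  then have "t \<le> d - e" by simp
  then show ?thesis by (rule total_degree_le_mono[OF t(1)])
qed simp

lemma leading_form_quotient:
  fixes D q :: "'a::idom poly poly"
  assumes D: "total_degree_le e D" "leading_form e D \<noteq> 0"
    and Dq: "total_degree_le d (D * q)" and "e \<le> d"
  shows "leading_form d (D * q) = leading_form e D * leading_form (d - e) q"
  using leading_form_mult[OF D(1) total_degree_le_quotient[OF assms]] \<open>e \<le> d\<close> by simp

lemma leading_form_quotient_eq:
  fixes D q :: "'a::idom poly poly"
  assumes D: "total_degree_le e D" "leading_form e D \<noteq> 0"
    and Dq: "total_degree_le d (D * q)" and "e \<le> d"
    and "leading_form d (D * q) = leading_form e D * s"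
  shows "leading_form (d - e) q = s"
  using leading_form_quotient[OF D Dq \<open>e \<le> d\<close>] assms(5) D(2) by simp

lemma degree_eq_if_leading_form:
  assumes "total_degree_le d P" "degree (leading_form d P) = d"
  shows "degree P = d"
proof (rule antisym)
  show "degree P \<le> d"
    by (rule degree_le) (use total_degree_le_coeff_eq_0[OF assms(1)] in auto)
  show "d \<le> degree P"
  proof (cases "d = 0")
    case False
    then have "coeff (leading_form d P) d \<noteq> 0" using assms(2) by (metis leading_coeff_0_iff degree_0)
    then have "coeff P d \<noteq> 0" by (auto simp: coeff_leading_form)
    then show ?thesis by (rule le_degree)
  qed simp
qed

lemma eval2_eq_sum: "eval2 p Z = (\<Sum>i\<le>degree p. [:[:coeff p i:]:] * Z ^ i)"
proof -
  have "degree (map_poly (\<lambda>c. [:[:c:]:]) p) = degree p"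
    by (rule degree_map_poly) simp
  then show ?thesis unfolding eval2_def poly_altdef by (simp add: coeff_map_poly)
qed

lemma total_degree_le_eval2:
  assumes "total_degree_le 1 Z"
  shows "total_degree_le (degree p) (eval2 p Z)"
  unfolding eval2_eq_sum
proof (rule total_degree_le_sum)
  fix i assume "i \<in> {..degree p}"
  have "total_degree_le (0 + i * 1) ([:[:coeff p i:]:] * Z ^ i)"
    by (rule total_degree_le_mult[OF total_degree_le_const total_degree_le_power[OF assms]])
  then show "total_degree_le (degree p) ([:[:coeff p i:]:] * Z ^ i)"
    by (rule total_degree_le_mono) (use \<open>i \<in> {..degree p}\<close> in simp)
qed

lemma leading_form_eval2:
  assumes "total_degree_le 1 Z"
  shows "leading_form (degree p) (eval2 p Z) = smult (lead_coeff p) (leading_form 1 Z ^ degree p)"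
proof -
  let ?summand = "\<lambda>i. [:[:coeff p i:]:] * Z ^ i"
  have summand: "total_degree_le (0 + i * 1) (?summand i)" for i
    by (rule total_degree_le_mult[OF total_degree_le_const total_degree_le_power[OF assms]])
  have "leading_form (degree p) (eval2 p Z) = (\<Sum>i\<le>degree p. leading_form (degree p) (?summand i))"
    unfolding eval2_eq_sum leading_form_sum ..
  also have "\<dots> = (\<Sum>i\<in>{degree p}. leading_form (degree p) (?summand i))"
  proof (rule sum.mono_neutral_right)
    show "\<forall>i\<in>{..degree p} - {degree p}. leading_form (degree p) (?summand i) = 0"
      using leading_form_eq_0_above[OF summand] by simp
  qed auto
  also have "\<dots> = leading_form (0 + degree p * 1) (?summand (degree p))" by simp
  also have "\<dots> = [:lead_coeff p:] * leading_form 1 Z ^ degree p"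
    unfolding leading_form_mult[OF total_degree_le_const total_degree_le_power[OF assms]]
      leading_form_const leading_form_power[OF assms] ..
  finally show ?thesis by simp
qed


section \<open>Degree of the determinant of a weighted polynomial matrix\<close>

lemma degree_coeff_prod_le:
  fixes f :: "'b \<Rightarrow> 'a::comm_semiring_1 poly"
  assumes "finite S" "\<And>i. i \<in> S \<Longrightarrow> degree (f i) \<le> e i"
  shows "degree (\<Prod>i\<in>S. f i) \<le> (\<Sum>i\<in>S. e i)
    \<and> coeff (\<Prod>i\<in>S. f i) (\<Sum>i\<in>S. e i) = (\<Prod>i\<in>S. coeff (f i) (e i))"
  using assms
proof (induction S rule: finite_induct)
  case (insert x F)
  then have IH: "degree (\<Prod>i\<in>F. f i) \<le> (\<Sum>i\<in>F. e i)"
      "coeff (\<Prod>i\<in>F. f i) (\<Sum>i\<in>F. e i) = (\<Prod>i\<in>F. coeff (f i) (e i))"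
    and x: "degree (f x) \<le> e x" by auto
  have "degree (f x * (\<Prod>i\<in>F. f i)) \<le> e x + (\<Sum>i\<in>F. e i)"
    by (rule order.trans[OF degree_mult_le add_mono[OF x IH(1)]])
  moreover have "coeff (f x * (\<Prod>i\<in>F. f i)) (e x + (\<Sum>i\<in>F. e i))
      = coeff (f x) (e x) * (\<Prod>i\<in>F. coeff (f i) (e i))"
    using coeff_mult_degree_sum[OF x IH(1)] IH(2) by simp
  ultimately show ?case using insert by simp
qed simp

text \<open>Each term of the Leibniz expansion of det A has degree at most the total weight N, and its
  coefficient of degree N is the corresponding term of det B.\<close>

lemma degree_coeff_det_weighted:
  fixes A :: "'a::comm_ring_1 poly mat" and u v :: "nat \<Rightarrow> int"
  assumes A: "A \<in> carrier_mat m m"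
    and zero: "\<And>i j. i < m \<Longrightarrow> j < m \<Longrightarrow> u i + v j < 0 \<Longrightarrow> A $$ (i, j) = 0"
    and deg: "\<And>i j. i < m \<Longrightarrow> j < m \<Longrightarrow> degree (A $$ (i, j)) \<le> nat (u i + v j)"
    and N: "(\<Sum>i<m. u i) + (\<Sum>j<m. v j) = int N"
  defines "B \<equiv> mat m m (\<lambda>(i, j). coeff (A $$ (i, j)) (nat (u i + v j)))"
  shows "degree (det A) \<le> N \<and> coeff (det A) N = det B"
proof -
  have B: "B \<in> carrier_mat m m" unfolding B_def by simp
  have diagonal: "degree (\<Prod>i = 0..<m. A $$ (i, p i)) \<le> N
      \<and> coeff (\<Prod>i = 0..<m. A $$ (i, p i)) N = (\<Prod>i = 0..<m. B $$ (i, p i))"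
    if p: "p permutes {0..<m}" for p
  proof -
    have pm: "i < m \<Longrightarrow> p i < m" for i using p by (simp add: permutes_in_image)
    show ?thesis
    proof (cases "\<exists>i<m. u i + v (p i) < 0")
      case True
      then obtain i where i: "i < m" "u i + v (p i) < 0" by blast
      then have "A $$ (i, p i) = 0" using zero pm by blast
      then have "A $$ (i, p i) = 0" "B $$ (i, p i) = 0" using i pm by (auto simp: B_def)
      then have "(\<Prod>i = 0..<m. A $$ (i, p i)) = 0" "(\<Prod>i = 0..<m. B $$ (i, p i)) = 0"
        using i(1) by (auto intro!: prod_zero bexI[of _ i])
      then show ?thesis by simp
    next
      case False
      have "(\<Sum>i = 0..<m. v (p i)) = (\<Sum>j<m. v j)"
        using sum.permute[OF p, of v] by (simp add: atLeast0LessThan comp_def)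
      then have "(\<Sum>i = 0..<m. u i + v (p i)) = int N"
        using N by (simp add: sum.distrib atLeast0LessThan)
      moreover have "int (\<Sum>i = 0..<m. nat (u i + v (p i))) = (\<Sum>i = 0..<m. u i + v (p i))"
        unfolding of_nat_sum using False by (intro sum.cong) auto
      ultimately have weight: "(\<Sum>i = 0..<m. nat (u i + v (p i))) = N" by (simp only: of_nat_eq_iff)
      have "degree (\<Prod>i = 0..<m. A $$ (i, p i)) \<le> (\<Sum>i = 0..<m. nat (u i + v (p i)))
        \<and> coeff (\<Prod>i = 0..<m. A $$ (i, p i)) (\<Sum>i = 0..<m. nat (u i + v (p i)))
          = (\<Prod>i = 0..<m. coeff (A $$ (i, p i)) (nat (u i + v (p i))))"
        by (rule degree_coeff_prod_le) (auto intro: deg pm)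
      moreover have "(\<Prod>i = 0..<m. coeff (A $$ (i, p i)) (nat (u i + v (p i))))
          = (\<Prod>i = 0..<m. B $$ (i, p i))"
        by (rule prod.cong) (auto simp: B_def pm)
      ultimately show ?thesis unfolding weight by simp
    qed
  qed
  have signed: "degree (of_int (sign p) * X) \<le> degree X"
    "coeff (of_int (sign p) * X) k = of_int (sign p) * coeff X k" for p and X :: "'a poly" and k
    by (simp_all add: of_int_poly degree_smult_le)
  have "degree (det A) \<le> N"
    unfolding det_def'[OF A]
  proof (rule degree_sum_le)
    fix p assume "p \<in> {p. p permutes {0..<m}}"
    then show "degree (of_int (sign p) * (\<Prod>i = 0..<m. A $$ (i, p i))) \<le> N"
      using diagonal signed(1) order.trans by blast
  qed (simp add: finite_permutations)
  moreover have "coeff (det A) N = det B"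
    unfolding det_def'[OF A] det_def'[OF B] coeff_sum signed(2)
    using diagonal by (intro sum.cong) auto
  ultimately show ?thesis by simp
qed


section \<open>Degree of the resultant of two bivariate polynomials\<close>

text \<open>Rows i < q of the Sylvester matrix hold shifted coefficients of P, the others those of Q.
  Weighting row i by this function and column j by j bounds the x-degree of every entry.\<close>

definition sylvester_row_weight :: "nat \<Rightarrow> nat \<Rightarrow> int" where
  "sylvester_row_weight q i = (if i < q then - int i else int q - int i)"

lemma sum_sylvester_row_weight:
  "(\<Sum>i<p + q. sylvester_row_weight q i) + (\<Sum>j<p + q. int j) = int (p * q)"
proof -
  define w where "w = (\<lambda>i::nat. if i < q then 0 else int q)"
  have "(\<Sum>i<p + q. sylvester_row_weight q i) = (\<Sum>i<p + q. w i - int i)"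
    by (rule sum.cong) (auto simp: sylvester_row_weight_def w_def)
  then have "(\<Sum>i<p + q. sylvester_row_weight q i) + (\<Sum>j<p + q. int j) = (\<Sum>i<p + q. w i)"
    by (simp add: sum_subtractf)
  also have "\<dots> = (\<Sum>i = 0..<q. w i) + (\<Sum>i = q..<p + q. w i)"
    unfolding lessThan_atLeast0 by (rule sum.atLeastLessThan_concat[symmetric]) auto
  also have "\<dots> = int (p * q)" by (simp add: w_def)
  finally show ?thesis .
qed

lemma sylvester_mat_sub_weighted_entry:
  fixes P Q :: "'a::comm_ring_1 poly poly"
  assumes P: "total_degree_le p P" and Q: "total_degree_le q Q" and ij: "i < p + q" "j < p + q"
  defines "w \<equiv> sylvester_row_weight q i + int j"
  shows "w < 0 \<Longrightarrow> sylvester_mat_sub p q P Q $$ (i, j) = 0"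
    and "degree (sylvester_mat_sub p q P Q $$ (i, j)) \<le> nat w"
    and "coeff (sylvester_mat_sub p q P Q $$ (i, j)) (nat w)
      = sylvester_mat_sub p q (leading_form p P) (leading_form q Q) $$ (i, j)"
proof -
  have PQ: "degree (coeff P (p + i - j)) \<le> p - (p + i - j)" "degree (coeff Q (i - j)) \<le> q - (i - j)"
    by (rule total_degree_le_degree_coeff[OF P], rule total_degree_le_degree_coeff[OF Q])
  note entry = sylvester_mat_sub_index[OF ij]
  show "w < 0 \<Longrightarrow> sylvester_mat_sub p q P Q $$ (i, j) = 0"
    unfolding entry w_def sylvester_row_weight_def by auto
  show "degree (sylvester_mat_sub p q P Q $$ (i, j)) \<le> nat w"
    unfolding entry w_def sylvester_row_weight_def using PQ by auto
  show "coeff (sylvester_mat_sub p q P Q $$ (i, j)) (nat w)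
      = sylvester_mat_sub p q (leading_form p P) (leading_form q Q) $$ (i, j)"
  proof -
    have "nat (int a - int b + int c) = a + c - b" "nat (- int b + int c) = c - b" for a b c :: nat
      by arith+
    then show ?thesis unfolding entry w_def sylvester_row_weight_def by (auto simp: coeff_leading_form)
  qed
qed

lemma det_sylvester_mat_sub_bivariate:
  fixes P Q :: "'a::comm_ring_1 poly poly"
  assumes P: "total_degree_le p P" and Q: "total_degree_le q Q"
  shows "degree (det (sylvester_mat_sub p q P Q)) \<le> p * q
    \<and> coeff (det (sylvester_mat_sub p q P Q)) (p * q)
      = det (sylvester_mat_sub p q (leading_form p P) (leading_form q Q))"
proof -
  let ?u = "sylvester_row_weight q" and ?v = "\<lambda>j. int j"
  have "mat (p + q) (p + q) (\<lambda>(i, j). coeff (sylvester_mat_sub p q P Q $$ (i, j)) (nat (?u i + ?v j)))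
      = sylvester_mat_sub p q (leading_form p P) (leading_form q Q)"
    by (rule eq_matI) (auto simp: sylvester_mat_sub_weighted_entry(3)[OF P Q])
  moreover have "degree (det (sylvester_mat_sub p q P Q)) \<le> p * q
    \<and> coeff (det (sylvester_mat_sub p q P Q)) (p * q) = det (mat (p + q) (p + q)
      (\<lambda>(i, j). coeff (sylvester_mat_sub p q P Q $$ (i, j)) (nat (?u i + ?v j))))"
    by (rule degree_coeff_det_weighted[OF sylvester_mat_sub_carrier])
      (simp_all add: sylvester_mat_sub_weighted_entry(1,2)[OF P Q] sum_sylvester_row_weight)
  ultimately show ?thesis by simp
qed

theorem degree_resultant_bivariate:
  fixes P Q :: "'a::comm_ring_1 poly poly"
  assumes P: "total_degree_le p P" "degree (leading_form p P) = p"
    and Q: "total_degree_le q Q" "degree (leading_form q Q) = q"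
    and "resultant (leading_form p P) (leading_form q Q) \<noteq> 0"
  shows "degree (resultant P Q) = p * q"
proof -
  have "resultant P Q = det (sylvester_mat_sub p q P Q)"
    "resultant (leading_form p P) (leading_form q Q)
      = det (sylvester_mat_sub p q (leading_form p P) (leading_form q Q))"
    using degree_eq_if_leading_form[OF P] degree_eq_if_leading_form[OF Q] P(2) Q(2)
    by (simp_all add: resultant_def sylvester_mat_def)
  then show ?thesis
    using det_sylvester_mat_sub_bivariate[OF P(1) Q(1)] assms(5) le_degree antisym by metis
qed


section \<open>The difference quotients f1 and f3\<close>

lemma mconst_eq_0_iff: "mconst c = 0 \<longleftrightarrow> c = 0"
  unfolding mconst_def by (metis lookup_single_eq single_zero)

interpretation mconst_hom: inj_comm_ring_hom mconst
  by unfold_locales (auto simp: mconst_def mult_single single_add mconst_eq_0_iff[unfolded mconst_def] intro: injI)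

interpretation mconst_poly_hom: map_poly_inj_comm_ring_hom mconst ..

lemma mult_the_quotient:
  fixes D N :: "'a::idom"
  assumes "D \<noteq> 0" "D dvd N"
  shows "D * (THE q. D * q = N) = N"
proof (rule theI')
  show "\<exists>!q. D * q = N" using assms by (auto elim!: dvdE)
qed

lemma square_dvd_if_double_root:
  fixes p :: "'a::idom poly"
  assumes "poly p a = 0" "poly (pderiv p) a = 0"
  shows "[:-a, 1:] ^ 2 dvd p"
proof -
  obtain q where q: "p = [:-a, 1:] * q" using assms(1) poly_eq_0_iff_dvd by blast
  have "pderiv p = [:-a, 1:] * pderiv q + q" unfolding q pderiv_mult by (simp add: pderiv_pCons)
  then have "poly q a = 0" using assms(2) by simp
  then obtain r where "q = [:-a, 1:] * r" using poly_eq_0_iff_dvd by blast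
  then have "p = [:-a, 1:] ^ 2 * r" using q by (metis power2_eq_square mult.assoc)
  then show ?thesis by (rule dvdI)
qed

definition Mv :: "mpoly poly poly" where
  "Mv = smult [:mconst (1/2):] (Xv + Yv)"

definition first_difference :: "mpoly poly \<Rightarrow> mpoly poly poly" where
  "first_difference p = eval2 p Yv - eval2 p Xv"

definition second_difference :: "mpoly poly \<Rightarrow> mpoly poly poly" where
  "second_difference p = eval2 p Yv - 2 * eval2 p Mv + eval2 p Xv"

lemma coeff_fpoly: "coeff (fpoly n) k = (if k = n then 1 else 0) + (if k < n then avar k else 0)"
  unfolding fpoly_def by (simp add: coeff_sum coeff_monom)

lemma degree_fpoly: "degree (fpoly n) = n"
  by (rule antisym) (auto intro: degree_le le_degree simp: coeff_fpoly)

lemma eval2_eq_pcompose: "eval2 p Z = pcompose (map_poly (\<lambda>c. [:c:]) p) Z"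
  by (simp add: eval2_def pcompose_altdef map_poly_map_poly o_def)

lemma eval2_Yv: "eval2 p Yv = map_poly (\<lambda>c. [:c:]) p"
  unfolding eval2_eq_pcompose Yv_def by (rule pcompose_idR)

lemma poly_map_poly_const_at_x:
  fixes p :: "'a::comm_semiring_1 poly"
  shows "poly (map_poly (\<lambda>c. [:c:]) p) [:0, 1:] = p"
  by (induction p) (auto simp: map_poly_pCons)

lemma eval2_Xv: "eval2 p Xv = [:p:]"
  unfolding eval2_eq_pcompose Xv_def pcompose_pCons_0 poly_map_poly_const_at_x ..

lemma const_half_times_2: "[:mconst (1/2):] * 2 = (1 :: mpoly poly)"
proof -
  have "[:mconst (1/2):] * 2 = map_poly mconst ([:1/2:] * 2)"
    by (simp add: hom_distribs mconst_hom.map_poly_pCons_hom)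
  also have "[:1/2:] * 2 = (1 :: rat poly)" by (simp add: numeral_poly)
  finally show ?thesis by simp
qed

lemma Yv_minus_Xv: "Yv - Xv = [:-[:0, 1:], 1:]"
  unfolding Yv_def Xv_def by simp

lemma poly_Mv_at_x: "poly Mv [:0, 1:] = [:0, 1:]"
proof -
  have "poly (Xv + Yv) [:0, 1:] = 2 * [:0, 1:]" unfolding Xv_def Yv_def by simp
  then have "poly Mv [:0, 1:] = [:mconst (1/2):] * (2 * [:0, 1:])" unfolding Mv_def by (simp only: poly_smult)
  then show ?thesis by (simp only: mult.assoc[symmetric] const_half_times_2 mult_1)
qed

lemma pderiv_Mv: "pderiv Mv = [:[:mconst (1/2):]:]"
  unfolding Mv_def Xv_def Yv_def by (simp add: pderiv_pCons pderiv_smult)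

lemma first_difference_dvd: "Yv - Xv dvd first_difference p"
proof -
  have "poly (first_difference p) [:0, 1:] = 0"
    unfolding first_difference_def eval2_Yv eval2_Xv by (simp add: poly_map_poly_const_at_x del: pCons_one)
  then show ?thesis unfolding Yv_minus_Xv by (simp add: poly_eq_0_iff_dvd)
qed

text \<open>The second difference vanishes to second order on the diagonal y = x because the midpoint of
  (x, x) is x and its derivative in y is 1/2.\<close>

lemma second_difference_dvd: "(Yv - Xv) ^ 2 dvd second_difference p"
proof -
  let ?F = "map_poly (\<lambda>c. [:c:]) p" and ?x = "[:0, 1:] :: mpoly poly"
  have sd: "second_difference p = ?F - 2 * pcompose ?F Mv + [:p:]"
    unfolding second_difference_def eval2_Xv eval2_Yv eval2_eq_pcompose[of p Mv] ..
  have Fx: "poly ?F ?x = p" by (rule poly_map_poly_const_at_x)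
  have "poly (second_difference p) ?x = 0"
    unfolding sd by (simp add: poly_pcompose poly_Mv_at_x Fx del: pCons_one)
  moreover have "poly (pderiv (second_difference p)) ?x
      = poly (pderiv ?F) ?x * (1 - [:mconst (1/2):] * 2)"
    unfolding sd by (simp add: pderiv_pcompose pderiv_Mv poly_pcompose poly_Mv_at_x pderiv_mult
        pderiv_add pderiv_diff pderiv_pCons algebra_simps del: pCons_one)
  moreover have "1 - [:mconst (1/2):] * 2 = (0 :: mpoly poly)"
    by (simp only: const_half_times_2 diff_self)
  ultimately have "[:-?x, 1:] ^ 2 dvd second_difference p"
    by (intro square_dvd_if_double_root) simp_all
  then show ?thesis unfolding Yv_minus_Xv .
qed

lemma f1_eq: "(Yv - Xv) * f1 n = first_difference (fpoly n)"
  unfolding f1_def first_difference_def[symmetric]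
  by (rule mult_the_quotient[OF _ first_difference_dvd]) (simp add: Yv_minus_Xv)

definition second_difference_denominator :: "mpoly poly poly" where
  "second_difference_denominator = smult [:mconst (1/2):] ((Yv - Xv) ^ 2)"

lemma f3_eq: "second_difference_denominator * f3 n = second_difference (fpoly n)"
  unfolding f3_def Mv_def[symmetric] second_difference_def[symmetric]
    second_difference_denominator_def[symmetric]
proof (rule mult_the_quotient)
  show "second_difference_denominator \<noteq> 0"
    by (simp add: second_difference_denominator_def Yv_minus_Xv mconst_eq_0_iff)
  have "(Yv - Xv) ^ 2 = second_difference_denominator * [:2:]"
    using const_half_times_2 by (simp add: second_difference_denominator_def)
  then show "second_difference_denominator dvd second_difference (fpoly n)"
    using second_difference_dvd by (metis dvd_mult_left)
qed

lemma total_degree_le_Xv: "total_degree_le 1 Xv"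
  unfolding Xv_def by (rule total_degree_leI) (auto simp: coeff_pCons split: nat.splits)

lemma leading_form_Xv: "leading_form 1 Xv = 1"
  unfolding Xv_def by (rule poly_eqI) (auto simp: coeff_leading_form coeff_pCons split: nat.splits)

lemma total_degree_le_Yv: "total_degree_le 1 Yv"
  unfolding Yv_def by (rule total_degree_leI) (auto simp: coeff_pCons split: nat.splits)

lemma leading_form_Yv: "leading_form 1 Yv = [:0, 1:]"
  unfolding Yv_def by (rule poly_eqI) (auto simp: coeff_leading_form coeff_pCons split: nat.splits)

lemma total_degree_le_Yv_minus_Xv: "total_degree_le 1 (Yv - Xv)"
  by (rule total_degree_le_diff[OF total_degree_le_Yv total_degree_le_Xv])

lemma leading_form_Yv_minus_Xv: "leading_form 1 (Yv - Xv) = [:-1, 1:]"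
  unfolding leading_form_diff leading_form_Yv leading_form_Xv
  by (simp only: one_pCons diff_pCons diff_0 diff_zero)

lemma Mv_eq_mult: "Mv = [:[:mconst (1/2):]:] * (Xv + Yv)"
  unfolding Mv_def by simp

lemma total_degree_le_Mv: "total_degree_le 1 Mv"
  using total_degree_le_mult[OF total_degree_le_const total_degree_le_add[OF total_degree_le_Xv total_degree_le_Yv]]
  unfolding Mv_eq_mult by simp

lemma leading_form_Mv: "leading_form 1 Mv = [:mconst (1/2), mconst (1/2):]"
proof -
  have "leading_form (0 + 1) Mv = [:mconst (1/2):] * (leading_form 1 Xv + leading_form 1 Yv)"
    unfolding Mv_eq_mult
    by (simp only: leading_form_mult[OF total_degree_le_const total_degree_le_add[OF total_degree_le_Xv
          total_degree_le_Yv]] leading_form_const leading_form_add)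
  then show ?thesis unfolding leading_form_Xv leading_form_Yv by (simp add: one_pCons del: pCons_one)
qed

lemma total_degree_le_eval2_fpoly: "total_degree_le 1 Z \<Longrightarrow> total_degree_le n (eval2 (fpoly n) Z)"
  using total_degree_le_eval2[of Z "fpoly n"] by (simp add: degree_fpoly)

lemma leading_form_eval2_fpoly:
  "total_degree_le 1 Z \<Longrightarrow> leading_form n (eval2 (fpoly n) Z) = leading_form 1 Z ^ n"
  using leading_form_eval2[of Z "fpoly n"] by (simp add: degree_fpoly coeff_fpoly)

lemma leading_form_times_2: "leading_form d (2 * P) = smult 2 (leading_form d P)"
proof -
  have "smult 2 X = X + X" for X :: "'a::comm_ring_1 poly"
    using smult_add_left[of 1 1 X] by (simp only: one_add_one smult_1_left)
  then show ?thesis by (simp only: mult_2 leading_form_add)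
qed

definition geometric_poly :: "nat \<Rightarrow> rat poly" where
  "geometric_poly n = (\<Sum>i<n. [:0, 1:] ^ i)"

definition second_difference_form :: "nat \<Rightarrow> rat poly" where
  "second_difference_form n = [:0, 1:] ^ n - smult 2 ([:1/2, 1/2:] ^ n) + 1"

definition second_difference_poly :: "nat \<Rightarrow> rat poly" where
  "second_difference_poly n = smult 2 (second_difference_form n div [:-1, 1:] ^ 2)"

lemma geometric_poly_mult: "[:-1, 1:] * geometric_poly n = [:0, 1:] ^ n - 1"
proof -
  have "([:0, 1:] - 1) * geometric_poly n = [:0, 1:] ^ n - 1"
    using power_diff_sumr2[of "[:0, 1:] :: rat poly" n 1] unfolding geometric_poly_def by simp
  then show ?thesis by (simp add: one_pCons del: pCons_one)
qed

lemma second_difference_poly_mult: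
  "smult (1/2) ([:-1, 1:] ^ 2) * second_difference_poly n = second_difference_form n"
proof -
  have "poly (second_difference_form n) 1 = 0"
    by (simp add: second_difference_form_def)
  moreover have "poly (pderiv (second_difference_form n)) 1 = 0"
    by (simp add: second_difference_form_def pderiv_power pderiv_pCons pderiv_add pderiv_diff pderiv_mult
        numeral_poly pderiv_smult)
  ultimately have "[:-1, 1:] ^ 2 dvd second_difference_form n"
    using square_dvd_if_double_root[of "second_difference_form n" 1] by simp
  then show ?thesis unfolding second_difference_poly_def by (simp add: dvd_mult_div_cancel)
qed

lemma leading_form_first_difference_fpoly:
  "leading_form n (first_difference (fpoly n)) = map_poly mconst ([:0, 1:] ^ n - 1)"
  unfolding first_difference_def leading_form_diff
    leading_form_eval2_fpoly[OF total_degree_le_Yv] leading_form_eval2_fpoly[OF total_degree_le_Xv]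
    leading_form_Yv leading_form_Xv
  by (simp add: hom_distribs mconst_hom.map_poly_pCons_hom del: pCons_one)

lemma leading_form_second_difference_fpoly:
  "leading_form n (second_difference (fpoly n)) = map_poly mconst (second_difference_form n)"
  unfolding second_difference_def second_difference_form_def leading_form_add leading_form_diff
    leading_form_times_2 leading_form_eval2_fpoly[OF total_degree_le_Yv]
    leading_form_eval2_fpoly[OF total_degree_le_Xv] leading_form_eval2_fpoly[OF total_degree_le_Mv]
    leading_form_Yv leading_form_Xv leading_form_Mv
  by (simp add: hom_distribs mconst_hom.map_poly_pCons_hom del: pCons_one)

lemma total_degree_le_first_difference_fpoly: "total_degree_le n (first_difference (fpoly n))"
  unfolding first_difference_def
  by (intro total_degree_le_diff total_degree_le_eval2_fpoly total_degree_le_Xv total_degree_le_Yv)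

lemma total_degree_le_second_difference_fpoly: "total_degree_le n (second_difference (fpoly n))"
  unfolding second_difference_def mult_2
  by (intro total_degree_le_add total_degree_le_diff total_degree_le_eval2_fpoly
      total_degree_le_Xv total_degree_le_Yv total_degree_le_Mv)

lemma leading_form_Yv_minus_Xv_ne_0: "leading_form 1 (Yv - Xv) \<noteq> 0"
  unfolding leading_form_Yv_minus_Xv by simp

lemma total_degree_le_f1:
  assumes "1 \<le> n"
  shows "total_degree_le (n - 1) (f1 n)"
  by (rule total_degree_le_quotient[OF total_degree_le_Yv_minus_Xv leading_form_Yv_minus_Xv_ne_0 _ assms])
    (unfold f1_eq, rule total_degree_le_first_difference_fpoly)

lemma leading_form_f1:
  assumes "1 \<le> n"
  shows "leading_form (n - 1) (f1 n) = map_poly mconst (geometric_poly n)"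
proof (rule leading_form_quotient_eq[OF total_degree_le_Yv_minus_Xv leading_form_Yv_minus_Xv_ne_0 _ assms])
  show "total_degree_le n ((Yv - Xv) * f1 n)"
    unfolding f1_eq by (rule total_degree_le_first_difference_fpoly)
  show "leading_form n ((Yv - Xv) * f1 n) = leading_form 1 (Yv - Xv) * map_poly mconst (geometric_poly n)"
    unfolding f1_eq leading_form_first_difference_fpoly leading_form_Yv_minus_Xv
      geometric_poly_mult[symmetric]
    by (simp add: hom_distribs mconst_hom.map_poly_pCons_hom)
qed

lemma second_difference_denominator_eq_mult:
  "second_difference_denominator = [:[:mconst (1/2):]:] * (Yv - Xv) ^ 2"
  unfolding second_difference_denominator_def by simp

lemma total_degree_le_second_difference_denominator: "total_degree_le 2 second_difference_denominator"
  using total_degree_le_mult[OF total_degree_le_const total_degree_le_power[OF total_degree_le_Yv_minus_Xv]]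
  unfolding second_difference_denominator_eq_mult by simp

lemma leading_form_second_difference_denominator:
  "leading_form 2 second_difference_denominator = map_poly mconst (smult (1/2) ([:-1, 1:] ^ 2))"
proof -
  have "leading_form (0 + 2 * 1) second_difference_denominator = [:mconst (1/2):] * [:-1, 1:] ^ 2"
    unfolding second_difference_denominator_eq_mult
    by (simp only: leading_form_mult[OF total_degree_le_const total_degree_le_power[OF total_degree_le_Yv_minus_Xv]]
        leading_form_const leading_form_power[OF total_degree_le_Yv_minus_Xv] leading_form_Yv_minus_Xv)
  then have "leading_form 2 second_difference_denominator = [:mconst (1/2):] * [:-1, 1:] ^ 2"
    by (simp only: add_0 mult_1_right)
  then show ?thesis by (simp add: hom_distribs mconst_hom.map_poly_pCons_hom)
qed

lemma leading_form_second_difference_denominator_ne_0: "leading_form 2 second_difference_denominator \<noteq> 0"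
  unfolding leading_form_second_difference_denominator by simp

lemma total_degree_le_f3:
  assumes "2 \<le> n"
  shows "total_degree_le (n - 2) (f3 n)"
  by (rule total_degree_le_quotient[OF total_degree_le_second_difference_denominator
        leading_form_second_difference_denominator_ne_0 _ assms])
    (unfold f3_eq, rule total_degree_le_second_difference_fpoly)

lemma leading_form_f3:
  assumes "2 \<le> n"
  shows "leading_form (n - 2) (f3 n) = map_poly mconst (second_difference_poly n)"
proof (rule leading_form_quotient_eq[OF total_degree_le_second_difference_denominator
      leading_form_second_difference_denominator_ne_0 _ assms])
  show "total_degree_le n (second_difference_denominator * f3 n)"
    unfolding f3_eq by (rule total_degree_le_second_difference_fpoly)
  show "leading_form n (second_difference_denominator * f3 n)
      = leading_form 2 second_difference_denominator * map_poly mconst (second_difference_poly n)"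
    unfolding f3_eq leading_form_second_difference_fpoly leading_form_second_difference_denominator
      second_difference_poly_mult[symmetric] mconst_poly_hom.hom_mult ..
qed


section \<open>The leading forms have no common root\<close>

lemma degree_geometric_poly:
  assumes "1 \<le> n"
  shows "degree (geometric_poly n) = n - 1"
proof -
  have "degree ([:0, 1:] ^ n + (- 1) :: rat poly) = n"
    using assms by (subst degree_add_eq_left) (simp_all add: degree_power_eq)
  then have "degree ([:0, 1:] ^ n - 1 :: rat poly) = n" by simp
  moreover from this have "geometric_poly n \<noteq> 0"
    using geometric_poly_mult[of n] assms by auto
  ultimately show ?thesis
    using geometric_poly_mult[of n] degree_mult_eq[of "[:-1, 1:]" "geometric_poly n"] by simp
qed

lemma degree_second_difference_form:
  assumes "2 \<le> n"
  shows "degree (second_difference_form n) = n"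
proof (rule antisym)
  show "degree (second_difference_form n) \<le> n"
    unfolding second_difference_form_def
    by (intro degree_add_le degree_diff_le order.trans[OF degree_mult_le])
      (auto simp: degree_power_eq)
  have "(1/2 :: rat) ^ n \<le> (1/2) ^ 2" by (rule power_decreasing) (use assms in auto)
  then have "2 * (1/2 :: rat) ^ n \<noteq> 1" by (simp add: power2_eq_square)
  moreover have "coeff (second_difference_form n) n = 1 - 2 * (1/2) ^ n"
  proof -
    have "degree ([:1/2, 1/2:] ^ n :: rat poly) = n" "degree ([:0, 1:] ^ n :: rat poly) = n"
      by (simp_all add: degree_power_eq)
    then have "coeff ([:1/2, 1/2:] ^ n :: rat poly) n = (1/2) ^ n" "coeff ([:0, 1:] ^ n :: rat poly) n = 1"
      using lead_coeff_power[of "[:1/2, 1/2:] :: rat poly" n] lead_coeff_power[of "[:0, 1:] :: rat poly" n]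
      by simp_all
    then show ?thesis unfolding second_difference_form_def using assms by simp
  qed
  ultimately show "n \<le> degree (second_difference_form n)" by (intro le_degree) simp
qed

lemma degree_second_difference_poly:
  assumes "2 \<le> n"
  shows "degree (second_difference_poly n) = n - 2"
proof -
  have "second_difference_poly n \<noteq> 0"
    using second_difference_poly_mult[of n] degree_second_difference_form[OF assms] assms by auto
  then have "degree (second_difference_form n) = 2 + degree (second_difference_poly n)"
    unfolding second_difference_poly_mult[symmetric] by (subst degree_mult_eq) (auto simp: degree_power_eq)
  then show ?thesis using degree_second_difference_form[OF assms] by simp
qed

interpretation of_rat_poly_hom: map_poly_inj_comm_ring_hom "of_rat :: rat \<Rightarrow> complex" ..

lemma eq_1_if_norm_eq_1_norm_add_1_eq_2:
  fixes z :: complex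
  assumes "norm z = 1" "norm (1 + z) = 2"
  shows "z = 1"
proof -
  have "Re z ^ 2 + Im z ^ 2 = 1" "(1 + Re z) ^ 2 + Im z ^ 2 = 4"
    using assms cmod_power2[of z] cmod_power2[of "1 + z"] by simp_all
  then have "Re z = 1" by (simp add: power2_eq_square algebra_simps)
  moreover from this have "Im z = 0" using \<open>Re z ^ 2 + Im z ^ 2 = 1\<close> by simp
  ultimately show ?thesis by (simp add: complex_eq_iff)
qed

lemma geometric_second_difference_no_common_root:
  fixes z :: complex
  assumes n: "2 \<le> n"
    and z1: "poly (map_poly of_rat (geometric_poly n)) z = 0"
    and z3: "poly (map_poly of_rat (second_difference_poly n)) z = 0"
  shows False
proof -
  have "poly (map_poly of_rat ([:-1, 1:] * geometric_poly n)) z = poly (map_poly of_rat ([:0, 1:] ^ n - 1)) z"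
    by (simp only: geometric_poly_mult)
  then have "z ^ n = 1" using z1 by (simp add: hom_distribs of_rat_hom.map_poly_pCons_hom)
  moreover have "poly (map_poly of_rat (smult (1/2) ([:-1, 1:] ^ 2) * second_difference_poly n)) z
      = poly (map_poly of_rat (second_difference_form n)) z"
    by (simp only: second_difference_poly_mult)
  then have "z ^ n - 2 * ((1 + z) / 2) ^ n + 1 = 0"
    using z3 by (simp add: second_difference_form_def hom_distribs of_rat_hom.map_poly_pCons_hom
        of_rat_hom.map_poly_hom_smult field_simps)
  ultimately have "((1 + z) / 2) ^ n = 1" by simp
  with \<open>z ^ n = 1\<close> have "norm z = 1" "norm (1 + z) = 2"
    using power_eq_1_iff[of z n] power_eq_1_iff[of "(1 + z) / 2" n] n by (auto simp: norm_divide)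
  then have "z = 1" by (rule eq_1_if_norm_eq_1_norm_add_1_eq_2)
  moreover have "poly (map_poly of_rat (geometric_poly n)) 1 = (of_nat n :: complex)"
    by (simp add: geometric_poly_def hom_distribs poly_sum of_rat_hom.map_poly_pCons_hom)
  ultimately show False using z1 n by simp
qed

lemma resultant_geometric_second_difference_ne_0:
  assumes "2 \<le> n"
  shows "resultant (geometric_poly n) (second_difference_poly n) \<noteq> 0"
proof
  let ?g = "map_poly (of_rat :: rat \<Rightarrow> complex) (geometric_poly n)"
    and ?s = "map_poly (of_rat :: rat \<Rightarrow> complex) (second_difference_poly n)"
  assume "resultant (geometric_poly n) (second_difference_poly n) = 0"
  then have "resultant ?g ?s = 0" by (simp add: of_rat_hom.resultant_hom)
  then have "\<not> constant (poly (gcd ?g ?s))" by (simp add: resultant_0_gcd constant_degree)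
  then obtain z where "poly (gcd ?g ?s) z = 0" using fundamental_theorem_of_algebra by blast
  then have "poly ?g z = 0" "poly ?s z = 0"
    by (metis dvd_def gcd_dvd1 mult_zero_left poly_mult, metis dvd_def gcd_dvd2 mult_zero_left poly_mult)
  then show False using geometric_second_difference_no_common_root assms by blast
qed


theorem theorem6:
  fixes n :: nat
  assumes "n \<ge> 3"
  shows "degree (Fres n) = (n - 1) * (n - 2)"
proof -
  have n: "1 \<le> n" "2 \<le> n" using assms by simp_all
  show ?thesis
    unfolding Fres_def
  proof (rule degree_resultant_bivariate)
    show "total_degree_le (n - 1) (f1 n)" "total_degree_le (n - 2) (f3 n)"
      by (rule total_degree_le_f1[OF n(1)], rule total_degree_le_f3[OF n(2)])
    show "degree (leading_form (n - 1) (f1 n)) = n - 1" "degree (leading_form (n - 2) (f3 n)) = n - 2"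
      unfolding leading_form_f1[OF n(1)] leading_form_f3[OF n(2)]
      by (simp_all only: mconst_hom.degree_map_poly_hom degree_geometric_poly[OF n(1)]
          degree_second_difference_poly[OF n(2)])
    show "resultant (leading_form (n - 1) (f1 n)) (leading_form (n - 2) (f3 n)) \<noteq> 0"
      unfolding leading_form_f1[OF n(1)] leading_form_f3[OF n(2)] mconst_hom.resultant_hom
      using resultant_geometric_second_difference_ne_0[OF n(2)] by simp
  qed
qed

end
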